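(* Let $\mathscr{X}$ be a complex Banach space and $\mathcal{A}\subseteq\mathcal{B}(\mathscr{X})$ a reflexive algebra with commutant $\mathcal{A}'$. Then $\mathrm{Grp}(\mathcal{A})\mathrm{Grp}(\mathcal{A}')\subseteq\mathrm{Col}(\mathcal{A})\subseteq\mathrm{Col}(\mathcal{A}')$. Moreover, if both $\mathcal{A}$ and $\mathcal{A}'$ are reflexive, then $\mathrm{Grp}(\mathcal{A})\mathrm{Grp}(\mathcal{A}')$ is a normal subgroup of $\mathrm{Col}(\mathcal{A})$.
   Context: $\mathcal{A}'=\{T\in\mathcal{B}(\mathscr{X}):TA=AT\ \forall A\in\mathcal{A}\}$. A subalgebra $\mathcal{A}$ is reflexive if $\mathrm{Alg}\,\mathrm{Lat}(\mathcal{A})=\mathcal{A}$, where $\mathrm{Lat}(\mathcal{T})$ is the set of closed subspaces invariant under all operators of $\mathcal{T}$ and $\mathrm{Alg}(\mathfrak{F})$ is the set of operators leaving every subspace of $\mathfrak{F}$ invariant. For a unital algebra $\mathcal{B}$, $\mathrm{Grp}(\mathcal{B})$ is the group of invertible $S\in\mathcal{B}$ with $S^{-1}\in\mathcal{B}$, and $\mathrm{Grp}(\mathcal{A})\mathrm{Grp}(\mathcal{A}')=\{AB:A\in\mathrm{Grp}(\mathcal{A}),B\in\mathrm{Grp}(\mathcal{A}')\}$. For a set $\mathcal{T}$ of operators, $\mathrm{Col}(\mathcal{T})$ is the group of invertible $S\in\mathcal{B}(\mathscr{X})$ such that for every closed subspace $\mathscr{M}$: $\mathscr{M}\in\mathrm{Lat}(\mathcal{T})$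 iff $S\mathscr{M}\in\mathrm{Lat}(\mathcal{T})$. *)

theory Defs
  imports "HOL-Analysis.Analysis" "HOL-Algebra.Coset"
begin

text \<open>HOL has no class of complex vector spaces; we introduce it as a
real normed vector space with a compatible complex scalar multiplication.\<close>

class complex_vector = real_vector +
  fixes scaleC :: "complex \<Rightarrow> 'a \<Rightarrow> 'a" (infixr \<open>*\<^sub>C\<close> 75)
  assumes scaleC_add_right: "a *\<^sub>C (x + y) = a *\<^sub>C x + a *\<^sub>C y"
    and scaleC_add_left: "(a + b) *\<^sub>C x = a *\<^sub>C x + b *\<^sub>C x"
    and scaleC_scaleC: "a *\<^sub>C (b *\<^sub>C x) = (a * b) *\<^sub>C x"
    and scaleC_one: "1 *\<^sub>C x = x"
    and scaleR_scaleC: "scaleR r x = (complex_of_real r) *\<^sub>C x"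

class complex_normed_vector = complex_vector + real_normed_vector +
  assumes norm_scaleC: "norm (a *\<^sub>C x) = cmod a * norm x"

class complex_banach = complex_normed_vector + banach

definition bounded_clinear :: "('a::complex_normed_vector \<Rightarrow> 'b::complex_normed_vector) \<Rightarrow> bool" where
  "bounded_clinear f \<longleftrightarrow> bounded_linear f \<and> (\<forall>c x. f (c *\<^sub>C x) = c *\<^sub>C f x)"

definition BX :: "('a::complex_normed_vector \<Rightarrow> 'a) set" where
  "BX = {T. bounded_clinear T}"

definition closed_csubspace :: "'a::complex_normed_vector set \<Rightarrow> bool" where
  "closed_csubspace M \<longleftrightarrow> closed M \<and> 0 \<in> M \<and> (\<forall>x\<in>M. \<forall>y\<in>M. x + y \<in> M)
     \<and> (\<forall>c. \<forall>x\<in>M. c *\<^sub>C x \<in> M)"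

definition Lat :: "('a::complex_normed_vector \<Rightarrow> 'a) set \<Rightarrow> 'a set set" where
  "Lat \<T> = {M. closed_csubspace M \<and> (\<forall>T\<in>\<T>. T ` M \<subseteq> M)}"

definition Alg :: "'a::complex_normed_vector set set \<Rightarrow> ('a \<Rightarrow> 'a) set" where
  "Alg \<F> = {T \<in> BX. \<forall>M\<in>\<F>. T ` M \<subseteq> M}"

definition subalgebra :: "('a::complex_normed_vector \<Rightarrow> 'a) set \<Rightarrow> bool" where
  "subalgebra \<A> \<longleftrightarrow> \<A> \<subseteq> BX \<and> (\<lambda>x. 0) \<in> \<A>
     \<and> (\<forall>S\<in>\<A>. \<forall>T\<in>\<A>. (\<lambda>x. S x + T x) \<in> \<A> \<and> S \<circ> T \<in> \<A>)
     \<and> (\<forall>c. \<forall>T\<in>\<A>. (\<lambda>x. c *\<^sub>C T x) \<in> \<A>)"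

definition reflexive_alg :: "('a::complex_normed_vector \<Rightarrow> 'a) set \<Rightarrow> bool" where
  "reflexive_alg \<A> \<longleftrightarrow> Alg (Lat \<A>) = \<A>"

definition commutant :: "('a::complex_normed_vector \<Rightarrow> 'a) set \<Rightarrow> ('a \<Rightarrow> 'a) set" where
  "commutant \<A> = {T \<in> BX. \<forall>A\<in>\<A>. T \<circ> A = A \<circ> T}"

definition Grp :: "('a \<Rightarrow> 'a) set \<Rightarrow> ('a \<Rightarrow> 'a) set" where
  "Grp \<B> = {S \<in> \<B>. bij S \<and> inv_into UNIV S \<in> \<B>}"

definition GrpProd :: "('a::complex_normed_vector \<Rightarrow> 'a) set \<Rightarrow> ('a \<Rightarrow> 'a) set" where
  "GrpProd \<A> = {A \<circ> B | A B. A \<in> Grp \<A> \<and> B \<in> Grp (commutant \<A>)}"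

definition Col :: "('a::complex_normed_vector \<Rightarrow> 'a) set \<Rightarrow> ('a \<Rightarrow> 'a) set" where
  "Col \<T> = {S \<in> Grp BX. \<forall>M. closed_csubspace M \<longrightarrow> (M \<in> Lat \<T> \<longleftrightarrow> S ` M \<in> Lat \<T>)}"

definition Col_group :: "('a::complex_normed_vector \<Rightarrow> 'a) set \<Rightarrow> ('a \<Rightarrow> 'a) monoid" where
  "Col_group \<T> = \<lparr>carrier = Col \<T>, mult = (\<circ>), one = id\<rparr>"

end

theory Submission
  imports Defs
begin

text \<open>An operator of \<open>Grp(\<A>)\<close> leaves every subspace of \<open>Lat \<A>\<close> fixed, and
an invertible operator commuting with \<open>\<A>\<close> carries it to another one; hence
\<open>Grp(\<A>)Grp(\<A>') \<subseteq> Col(\<A>)\<close>. Conversely, if \<open>S \<in> Col(\<A>)\<close> then conjugation by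
\<open>S\<close> preserves \<open>Alg (Lat \<A>)\<close>, which is \<open>\<A>\<close> by reflexivity; so it also preserves
the commutant \<open>\<A>'\<close>, and an invertible operator whose conjugation preserves a
set of operators permutes its invariant subspaces, giving \<open>S \<in> Col(\<A>')\<close>. The same
conjugation invariance of \<open>\<A>\<close> and \<open>\<A>'\<close> makes \<open>Grp(\<A>)Grp(\<A>')\<close> normal in
\<open>Col(\<A>)\<close>; it is a subgroup because \<open>\<A>\<close> and \<open>\<A>'\<close> commute.\<close>

text \<open>Plain \<open>inv\<close> is taken by the group inverse of HOL-Algebra's structure syntax.\<close>

abbreviation inv_op :: "('b \<Rightarrow> 'b) \<Rightarrow> 'b \<Rightarrow> 'b" where
  "inv_op f \<equiv> inv_into UNIV f"

lemma bounded_clinear_compose: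
  "bounded_clinear f \<Longrightarrow> bounded_clinear g \<Longrightarrow> bounded_clinear (f \<circ> g)"
  unfolding bounded_clinear_def using bounded_linear_compose[of f g] by (auto simp: o_def)

lemma bounded_clinear_id: "bounded_clinear id"
  unfolding bounded_clinear_def using bounded_linear_ident by (simp add: id_def)

lemma BX_comp: "S \<in> BX \<Longrightarrow> T \<in> BX \<Longrightarrow> S \<circ> T \<in> BX"
  by (simp add: BX_def bounded_clinear_compose)

lemma id_in_BX: "id \<in> BX"
  by (simp add: BX_def bounded_clinear_id)

lemma closed_csubspace_vimage:
  assumes f: "bounded_clinear f" and M: "closed_csubspace M"
  shows "closed_csubspace (f -` M)"
proof -
  have lin: "bounded_linear f" and scale: "\<And>c x. f (c *\<^sub>C x) = c *\<^sub>C f x"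
    using f unfolding bounded_clinear_def by auto
  have "closed (f -` M)"
    using M lin unfolding closed_csubspace_def
    by (auto intro: closed_vimage linear_continuous_on)
  with M show ?thesis
    unfolding closed_csubspace_def using lin scale by (simp add: linear_simps)
qed

lemma GrpD: "S \<in> Grp C \<Longrightarrow> S \<in> C" "S \<in> Grp C \<Longrightarrow> inv_op S \<in> C"
  unfolding Grp_def by auto

lemma Grp_bij: "S \<in> Grp C \<Longrightarrow> bij S"
  unfolding Grp_def by auto

lemma Grp_inv_inv: "S \<in> Grp C \<Longrightarrow> inv_op (inv_op S) = S"
  using Grp_bij inv_inv_eq by blast

lemma Grp_inv_apply [simp]:
  "S \<in> Grp C \<Longrightarrow> inv_op S (S x) = x"
  "S \<in> Grp C \<Longrightarrow> S (inv_op S x) = x"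
  using Grp_bij[of S C] by (simp_all add: bij_is_inj bij_is_surj surj_f_inv_f)

lemma Grp_inv: "S \<in> Grp C \<Longrightarrow> inv_op S \<in> Grp C"
  unfolding Grp_def by (auto simp: bij_imp_bij_inv inv_inv_eq)

lemma mono_Grp: "C \<subseteq> D \<Longrightarrow> Grp C \<subseteq> Grp D"
  unfolding Grp_def by auto

lemma Grp_id: "id \<in> C \<Longrightarrow> id \<in> Grp C"
  unfolding Grp_def by simp

lemma Grp_comp:
  assumes "\<And>X Y. X \<in> C \<Longrightarrow> Y \<in> C \<Longrightarrow> X \<circ> Y \<in> C" and "S \<in> Grp C" and "T \<in> Grp C"
  shows "S \<circ> T \<in> Grp C"
  using assms unfolding Grp_def by (auto simp: bij_comp o_inv_distrib)

lemma Grp_conj: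
  assumes S: "S \<in> Grp D" and X: "X \<in> Grp C" and conj: "\<And>Y. Y \<in> C \<Longrightarrow> S \<circ> Y \<circ> inv_op S \<in> C"
  shows "S \<circ> X \<circ> inv_op S \<in> Grp C"
proof -
  have bij: "bij S" "bij (inv_op S)" "bij X"
    using Grp_bij[OF S] Grp_bij[OF Grp_inv[OF S]] Grp_bij[OF X] by auto
  then have "inv_op (S \<circ> X \<circ> inv_op S) = S \<circ> inv_op X \<circ> inv_op S"
    by (simp add: o_inv_distrib bij_comp Grp_inv_inv[OF S] o_assoc)
  then show ?thesis
    unfolding Grp_def using conj[OF GrpD(1)[OF X]] conj[OF GrpD(2)[OF X]] bij
    by (simp add: bij_comp)
qed

lemma BX_conj: "S \<in> Grp BX \<Longrightarrow> T \<in> BX \<Longrightarrow> S \<circ> T \<circ> inv_op S \<in> BX"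
  using GrpD[of S BX] by (simp add: BX_comp)

lemma closed_csubspace_image_Grp_BX:
  assumes S: "S \<in> Grp BX" and M: "closed_csubspace M"
  shows "closed_csubspace (S ` M)"
proof -
  have "S ` M = inv_op S -` M"
    using bij_vimage_eq_inv_image[OF bij_imp_bij_inv[OF Grp_bij[OF S]]] Grp_inv_inv[OF S] by simp
  then show ?thesis
    using closed_csubspace_vimage[OF _ M] GrpD(2)[OF S] by (simp add: BX_def)
qed

lemma LatD:
  "M \<in> Lat \<T> \<Longrightarrow> closed_csubspace M"
  "M \<in> Lat \<T> \<Longrightarrow> T \<in> \<T> \<Longrightarrow> x \<in> M \<Longrightarrow> T x \<in> M"
  unfolding Lat_def by auto

lemma Lat_image_Grp:
  assumes S: "S \<in> Grp \<T>" and M: "M \<in> Lat \<T>"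
  shows "S ` M = M"
proof
  show "S ` M \<subseteq> M" using LatD(2)[OF M GrpD(1)[OF S]] by blast
  show "M \<subseteq> S ` M"
  proof
    fix x assume "x \<in> M"
    then have "inv_op S x \<in> M" using LatD(2)[OF M GrpD(2)[OF S]] by blast
    then show "x \<in> S ` M" using Grp_inv_apply(2)[OF S, of x] by (metis image_eqI)
  qed
qed

lemma Lat_image_if_conj_closed:
  assumes S: "S \<in> Grp BX" and conj: "\<And>T. T \<in> \<T> \<Longrightarrow> inv_op S \<circ> T \<circ> S \<in> \<T>"
    and M: "M \<in> Lat \<T>"
  shows "S ` M \<in> Lat \<T>"
proof -
  have "T (S x) \<in> S ` M" if T: "T \<in> \<T>" and x: "x \<in> M" for T x
  proof -
    have "(inv_op S \<circ> T \<circ> S) x \<in> M" using LatD(2)[OF M conj[OF T] x] .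
    moreover have "T (S x) = S ((inv_op S \<circ> T \<circ> S) x)" using S by simp
    ultimately show ?thesis by blast
  qed
  then show ?thesis
    unfolding Lat_def using closed_csubspace_image_Grp_BX[OF S LatD(1)[OF M]] by blast
qed

lemma ColI:
  assumes "S \<in> Grp BX" and "\<And>M. M \<in> Lat \<T> \<Longrightarrow> S ` M \<in> Lat \<T>"
    and "\<And>M. M \<in> Lat \<T> \<Longrightarrow> inv_op S ` M \<in> Lat \<T>"
  shows "S \<in> Col \<T>"
proof -
  have "M \<in> Lat \<T>" if "S ` M \<in> Lat \<T>" for M
    using assms(3)[OF that] image_inv_f_f[OF bij_is_inj[OF Grp_bij[OF assms(1)]]] by simp
  then show ?thesis
    unfolding Col_def using assms(1,2) by blast
qed

lemma Col_Grp_BX: "S \<in> Col \<T> \<Longrightarrow> S \<in> Grp BX"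
  unfolding Col_def by simp

lemma Col_image_Lat: "S \<in> Col \<T> \<Longrightarrow> M \<in> Lat \<T> \<Longrightarrow> S ` M \<in> Lat \<T>"
  unfolding Col_def Lat_def by blast

lemma Col_inv:
  assumes S: "S \<in> Col \<T>"
  shows "inv_op S \<in> Col \<T>"
proof (rule ColI)
  have G: "S \<in> Grp BX" using S by (rule Col_Grp_BX)
  show "inv_op S \<in> Grp BX" using Grp_inv[OF G] .
  fix M assume M: "M \<in> Lat \<T>"
  have "S ` inv_op S ` M = M" using G by (simp add: image_image)
  moreover have "closed_csubspace (inv_op S ` M)"
    using closed_csubspace_image_Grp_BX[OF Grp_inv[OF G] LatD(1)[OF M]] .
  ultimately show "inv_op S ` M \<in> Lat \<T>"
    using S M unfolding Col_def by simp
  show "inv_op (inv_op S) ` M \<in> Lat \<T>"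
    using Col_image_Lat[OF S M] Grp_inv_inv[OF G] by simp
qed

lemma Col_comp:
  assumes S: "S \<in> Col \<T>" and R: "R \<in> Col \<T>"
  shows "S \<circ> R \<in> Col \<T>"
proof (rule ColI)
  have GS: "S \<in> Grp BX" and GR: "R \<in> Grp BX" using S R by (auto intro: Col_Grp_BX)
  show "S \<circ> R \<in> Grp BX" using Grp_comp[OF BX_comp GS GR] .
  fix M assume M: "M \<in> Lat \<T>"
  show "(S \<circ> R) ` M \<in> Lat \<T>"
    using Col_image_Lat[OF S Col_image_Lat[OF R M]] by (simp add: image_comp)
  have "inv_op (S \<circ> R) = inv_op R \<circ> inv_op S"
    using o_inv_distrib Grp_bij[OF GS] Grp_bij[OF GR] by blast
  then show "inv_op (S \<circ> R) ` M \<in> Lat \<T>"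
    using Col_image_Lat[OF Col_inv[OF R] Col_image_Lat[OF Col_inv[OF S] M]]
    by (simp add: image_comp)
qed

lemma id_in_Col: "id \<in> Col \<T>"
  by (rule ColI) (simp_all add: Grp_id id_in_BX)

lemma group_Col_group: "group (Col_group \<T>)"
proof (rule groupI)
  fix x assume "x \<in> carrier (Col_group \<T>)"
  then have x: "x \<in> Col \<T>" unfolding Col_group_def by simp
  have "inv_op x \<circ> x = id" using Grp_bij[OF Col_Grp_BX[OF x]] by (simp add: bij_is_inj)
  then show "\<exists>y\<in>carrier (Col_group \<T>). y \<otimes>\<^bsub>Col_group \<T>\<^esub> x = \<one>\<^bsub>Col_group \<T>\<^esub>"
    using Col_inv[OF x] unfolding Col_group_def by auto
qed (auto simp: Col_group_def Col_comp id_in_Col o_assoc)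

lemma Col_group_inv:
  assumes x: "x \<in> Col \<T>"
  shows "inv\<^bsub>Col_group \<T>\<^esub> x = inv_op x"
proof (rule group.inv_equality[OF group_Col_group])
  show "inv_op x \<otimes>\<^bsub>Col_group \<T>\<^esub> x = \<one>\<^bsub>Col_group \<T>\<^esub>"
    using Grp_bij[OF Col_Grp_BX[OF x]] unfolding Col_group_def by (simp add: bij_is_inj)
qed (use x Col_inv[OF x] in \<open>simp_all add: Col_group_def\<close>)

lemma subalgebra_subset_BX: "subalgebra \<A> \<Longrightarrow> \<A> \<subseteq> BX"
  unfolding subalgebra_def by blast

lemma reflexive_alg_id:
  assumes "reflexive_alg \<A>"
  shows "id \<in> \<A>"
proof -
  have "id \<in> Alg (Lat \<A>)" unfolding Alg_def by (simp add: id_in_BX)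
  then show ?thesis using assms unfolding reflexive_alg_def by simp
qed

lemma Alg_Lat_conj_Col:
  assumes S: "S \<in> Col \<T>" and T: "T \<in> Alg (Lat \<T>)"
  shows "S \<circ> T \<circ> inv_op S \<in> Alg (Lat \<T>)"
proof -
  have G: "S \<in> Grp BX" using S by (rule Col_Grp_BX)
  have TB: "T \<in> BX" and T_Lat: "\<And>M. M \<in> Lat \<T> \<Longrightarrow> T ` M \<subseteq> M"
    using T unfolding Alg_def by auto
  have "(S \<circ> T \<circ> inv_op S) ` N \<subseteq> N" if N: "N \<in> Lat \<T>" for N
  proof -
    have "T ` inv_op S ` N \<subseteq> inv_op S ` N"
      by (rule T_Lat[OF Col_image_Lat[OF Col_inv[OF S] N]])
    then have "S ` T ` inv_op S ` N \<subseteq> S ` inv_op S ` N" by (rule image_mono)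
    moreover have "S ` inv_op S ` N = N" using G by (simp add: image_image)
    ultimately show ?thesis by (simp add: image_comp)
  qed
  with BX_conj[OF G TB] show ?thesis unfolding Alg_def by simp
qed

lemma commutantI:
  "C \<in> BX \<Longrightarrow> (\<And>T x. T \<in> \<A> \<Longrightarrow> C (T x) = T (C x)) \<Longrightarrow> C \<in> commutant \<A>"
  unfolding commutant_def by (simp add: fun_eq_iff)

lemma commutantD: "C \<in> commutant \<A> \<Longrightarrow> T \<in> \<A> \<Longrightarrow> C (T x) = T (C x)"
  unfolding commutant_def by (auto simp: fun_eq_iff)

lemma commutant_subset_BX: "commutant \<A> \<subseteq> BX"
  unfolding commutant_def by blast

lemma commutant_comp:
  assumes "X \<in> commutant \<A>" and "Y \<in> commutant \<A>"
  shows "X \<circ> Y \<in> commutant \<A>"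
proof (rule commutantI)
  show "X \<circ> Y \<in> BX"
    using assms commutant_subset_BX[of \<A>] by (intro BX_comp) (auto dest: subsetD)
qed (simp add: commutantD[OF assms(1)] commutantD[OF assms(2)])

lemma id_in_commutant: "id \<in> commutant \<A>"
  by (rule commutantI) (simp_all add: id_in_BX)

lemma commutant_conj:
  assumes S: "S \<in> Grp BX" and conj: "\<And>T. T \<in> \<A> \<Longrightarrow> inv_op S \<circ> T \<circ> S \<in> \<A>"
    and C: "C \<in> commutant \<A>"
  shows "S \<circ> C \<circ> inv_op S \<in> commutant \<A>"
proof (rule commutantI)
  show "S \<circ> C \<circ> inv_op S \<in> BX"
    using S subsetD[OF commutant_subset_BX C] by (rule BX_conj)
  fix T x assume T: "T \<in> \<A>"
  have "(S \<circ> C \<circ> inv_op S) (T x) = S (C ((inv_op S \<circ> T \<circ> S) (inv_op S x)))" using S by simp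
  also have "\<dots> = S ((inv_op S \<circ> T \<circ> S) (C (inv_op S x)))" using commutantD[OF C conj[OF T]] by simp
  also have "\<dots> = T ((S \<circ> C \<circ> inv_op S) x)" using S by simp
  finally show "(S \<circ> C \<circ> inv_op S) (T x) = T ((S \<circ> C \<circ> inv_op S) x)" .
qed

lemma reflexive_alg_conj_Col:
  "reflexive_alg \<A> \<Longrightarrow> S \<in> Col \<A> \<Longrightarrow> T \<in> \<A> \<Longrightarrow> S \<circ> T \<circ> inv_op S \<in> \<A>"
  using Alg_Lat_conj_Col unfolding reflexive_alg_def by metis

lemma commutant_conj_Col:
  assumes r: "reflexive_alg \<A>" and S: "S \<in> Col \<A>" and C: "C \<in> commutant \<A>"
  shows "S \<circ> C \<circ> inv_op S \<in> commutant \<A>"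
proof (rule commutant_conj[OF Col_Grp_BX[OF S] _ C])
  fix T assume "T \<in> \<A>"
  then show "inv_op S \<circ> T \<circ> S \<in> \<A>"
    using reflexive_alg_conj_Col[OF r Col_inv[OF S]] by (simp add: Grp_inv_inv[OF Col_Grp_BX[OF S]])
qed

lemma Col_subset_Col_commutant:
  assumes r: "reflexive_alg \<A>"
  shows "Col \<A> \<subseteq> Col (commutant \<A>)"
proof
  have image: "S ` M \<in> Lat (commutant \<A>)" if S: "S \<in> Col \<A>" and M: "M \<in> Lat (commutant \<A>)" for S M
  proof (rule Lat_image_if_conj_closed[OF Col_Grp_BX[OF S] _ M])
    fix C assume "C \<in> commutant \<A>"
    then show "inv_op S \<circ> C \<circ> S \<in> commutant \<A>"
      using commutant_conj_Col[OF r Col_inv[OF S]] by (simp add: Grp_inv_inv[OF Col_Grp_BX[OF S]])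
  qed
  fix S assume S: "S \<in> Col \<A>"
  show "S \<in> Col (commutant \<A>)"
    using Col_Grp_BX[OF S] image[OF S] image[OF Col_inv[OF S]] by (rule ColI)
qed

lemma GrpProdI: "A \<in> Grp \<A> \<Longrightarrow> B \<in> Grp (commutant \<A>) \<Longrightarrow> A \<circ> B \<in> GrpProd \<A>"
  unfolding GrpProd_def by blast

lemma GrpProdE:
  assumes "X \<in> GrpProd \<A>"
  obtains A B where "X = A \<circ> B" "A \<in> Grp \<A>" "B \<in> Grp (commutant \<A>)"
  using assms unfolding GrpProd_def by blast

lemma Lat_image_Grp_commutant:
  assumes B: "B \<in> Grp (commutant \<A>)" and M: "M \<in> Lat \<A>"
  shows "B ` M \<in> Lat \<A>"
proof (rule Lat_image_if_conj_closed[OF _ _ M])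
  show G: "B \<in> Grp BX" using B mono_Grp[OF commutant_subset_BX] by blast
  fix T assume T: "T \<in> \<A>"
  have "(inv_op B \<circ> T \<circ> B) x = T x" for x
  proof -
    have "T (B x) = B (T x)" using commutantD[OF GrpD(1)[OF B] T] by (rule sym)
    then show ?thesis using Grp_inv_apply(1)[OF G] by simp
  qed
  then have "inv_op B \<circ> T \<circ> B = T" by (rule ext)
  with T show "inv_op B \<circ> T \<circ> B \<in> \<A>" by simp
qed

lemma Lat_image_GrpProd:
  assumes "X \<in> GrpProd \<A>" and M: "M \<in> Lat \<A>"
  shows "X ` M \<in> Lat \<A>"
proof -
  obtain A B where X: "X = A \<circ> B" and A: "A \<in> Grp \<A>" and B: "B \<in> Grp (commutant \<A>)"
    using assms(1) by (rule GrpProdE)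
  have "X ` M = A ` B ` M" unfolding X by (simp add: image_comp)
  then show ?thesis
    using Lat_image_Grp[OF A] Lat_image_Grp_commutant[OF B M] by simp
qed

lemma GrpProd_Grp_BX:
  assumes sub: "\<A> \<subseteq> BX" and "X \<in> GrpProd \<A>"
  shows "X \<in> Grp BX"
proof -
  obtain A B where X: "X = A \<circ> B" and A: "A \<in> Grp \<A>" and B: "B \<in> Grp (commutant \<A>)"
    using assms(2) by (rule GrpProdE)
  have GA: "A \<in> Grp BX" using A mono_Grp[OF sub] by blast
  have GB: "B \<in> Grp BX" using B mono_Grp[OF commutant_subset_BX] by blast
  show ?thesis unfolding X using Grp_comp[OF BX_comp GA GB] .
qed

lemma GrpProd_inv:
  assumes "X \<in> GrpProd \<A>"
  shows "inv_op X \<in> GrpProd \<A>"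
proof -
  obtain A B where X: "X = A \<circ> B" and A: "A \<in> Grp \<A>" and B: "B \<in> Grp (commutant \<A>)"
    using assms by (rule GrpProdE)
  have "inv_op X = inv_op B \<circ> inv_op A"
    unfolding X using o_inv_distrib Grp_bij[OF A] Grp_bij[OF B] by blast
  also have "\<dots> = inv_op A \<circ> inv_op B"
    using commutantD[OF GrpD(2)[OF B] GrpD(2)[OF A]] by (simp add: fun_eq_iff)
  finally show ?thesis using GrpProdI[OF Grp_inv[OF A] Grp_inv[OF B]] by simp
qed

lemma GrpProd_subset_Col:
  assumes "\<A> \<subseteq> BX"
  shows "GrpProd \<A> \<subseteq> Col \<A>"
proof
  fix X assume X: "X \<in> GrpProd \<A>"
  show "X \<in> Col \<A>"
  proof (rule ColI)
    show "X \<in> Grp BX" using assms X by (rule GrpProd_Grp_BX)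
  qed (use X GrpProd_inv[OF X] in \<open>simp_all add: Lat_image_GrpProd\<close>)
qed

lemma GrpProd_comp:
  assumes sa: "subalgebra \<A>" and "X \<in> GrpProd \<A>" and "Y \<in> GrpProd \<A>"
  shows "X \<circ> Y \<in> GrpProd \<A>"
proof -
  obtain A B where X: "X = A \<circ> B" and A: "A \<in> Grp \<A>" and B: "B \<in> Grp (commutant \<A>)"
    using assms(2) by (rule GrpProdE)
  obtain A' B' where Y: "Y = A' \<circ> B'" and A': "A' \<in> Grp \<A>" and B': "B' \<in> Grp (commutant \<A>)"
    using assms(3) by (rule GrpProdE)
  have "X \<circ> Y = (A \<circ> A') \<circ> (B \<circ> B')"
    unfolding X Y using commutantD[OF GrpD(1)[OF B] GrpD(1)[OF A']] by (simp add: fun_eq_iff)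
  moreover have "A \<circ> A' \<in> Grp \<A>"
    using sa A A' unfolding subalgebra_def by (intro Grp_comp) blast+
  moreover have "B \<circ> B' \<in> Grp (commutant \<A>)"
    using B B' by (intro Grp_comp commutant_comp)
  ultimately show ?thesis by (simp add: GrpProdI)
qed

lemma subgroup_GrpProd:
  assumes sa: "subalgebra \<A>" and "id \<in> \<A>"
  shows "subgroup (GrpProd \<A>) (Col_group \<A>)"
proof (rule group.subgroupI[OF group_Col_group])
  have sub: "GrpProd \<A> \<subseteq> Col \<A>"
    using subalgebra_subset_BX[OF sa] by (rule GrpProd_subset_Col)
  then show "GrpProd \<A> \<subseteq> carrier (Col_group \<A>)" unfolding Col_group_def by simp
  have "id \<circ> id \<in> GrpProd \<A>"
    using assms(2) by (intro GrpProdI Grp_id id_in_commutant)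
  then show "GrpProd \<A> \<noteq> {}" by blast
  fix X Y assume X: "X \<in> GrpProd \<A>" and Y: "Y \<in> GrpProd \<A>"
  have "X \<in> Col \<A>" using X sub by (rule subsetD[rotated])
  then show "inv\<^bsub>Col_group \<A>\<^esub> X \<in> GrpProd \<A>"
    using GrpProd_inv[OF X] by (simp add: Col_group_inv)
  show "X \<otimes>\<^bsub>Col_group \<A>\<^esub> Y \<in> GrpProd \<A>"
    using GrpProd_comp[OF sa X Y] unfolding Col_group_def by simp
qed

lemma GrpProd_conj_Col:
  assumes r: "reflexive_alg \<A>" and S: "S \<in> Col \<A>" and "X \<in> GrpProd \<A>"
  shows "S \<circ> X \<circ> inv_op S \<in> GrpProd \<A>"
proof -
  obtain A B where X: "X = A \<circ> B" and A: "A \<in> Grp \<A>" and B: "B \<in> Grp (commutant \<A>)"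
    using assms(3) by (rule GrpProdE)
  have G: "S \<in> Grp BX" using S by (rule Col_Grp_BX)
  have "S \<circ> X \<circ> inv_op S = (S \<circ> A \<circ> inv_op S) \<circ> (S \<circ> B \<circ> inv_op S)"
    unfolding X using G by (simp add: fun_eq_iff)
  moreover have "S \<circ> A \<circ> inv_op S \<in> Grp \<A>"
    using G A reflexive_alg_conj_Col[OF r S] by (rule Grp_conj)
  moreover have "S \<circ> B \<circ> inv_op S \<in> Grp (commutant \<A>)"
    using G B commutant_conj_Col[OF r S] by (rule Grp_conj)
  ultimately show ?thesis by (simp add: GrpProdI)
qed

lemma normal_GrpProd:
  assumes sa: "subalgebra \<A>" and r: "reflexive_alg \<A>"
  shows "GrpProd \<A> \<lhd> Col_group \<A>"
proof (rule group.normal_invI[OF group_Col_group subgroup_GrpProd[OF sa reflexive_alg_id[OF r]]])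
  fix S X assume "S \<in> carrier (Col_group \<A>)" and X: "X \<in> GrpProd \<A>"
  then have S: "S \<in> Col \<A>" unfolding Col_group_def by simp
  show "S \<otimes>\<^bsub>Col_group \<A>\<^esub> X \<otimes>\<^bsub>Col_group \<A>\<^esub> inv\<^bsub>Col_group \<A>\<^esub> S \<in> GrpProd \<A>"
    using GrpProd_conj_Col[OF r S X] unfolding Col_group_inv[OF S] by (simp add: Col_group_def)
qed

theorem theorem3p10:
  fixes \<A> :: "('a::complex_banach \<Rightarrow> 'a) set"
  assumes "subalgebra \<A>" and "reflexive_alg \<A>"
  shows "GrpProd \<A> \<subseteq> Col \<A> \<and> Col \<A> \<subseteq> Col (commutant \<A>)
    \<and> (reflexive_alg (commutant \<A>) \<longrightarrow> normal (GrpProd \<A>) (Col_group \<A>))"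
proof -
  have "GrpProd \<A> \<subseteq> Col \<A>"
    using subalgebra_subset_BX[OF assms(1)] by (rule GrpProd_subset_Col)
  then show ?thesis
    using Col_subset_Col_commutant[OF assms(2)] normal_GrpProd[OF assms] by simp
qed

end
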